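(* Fix $r\ge 2$ and let $z_m$, $z_m^{(j)}$ be as in the context. When $\frac{r^2}{r+1}\operatorname{Res}(Q^{(r+1)/r})$ is written as a polynomial in the variables $z_m^{(j)}$ ($0\le m\le r-2$, $j\ge 0$), it has the form $$\frac{r^2}{r+1}\operatorname{Res}(Q^{(r+1)/r})=\frac{1}{2}\sum_{j=0}^{r-2}z_jz_{r-2-j}+W_r(z),$$ where every monomial of $W_r(z)$ contains at least one factor $z_m^{(j)}$ with $j\ge 1$.
   Context: Let $R$ be the differential algebra over $\mathbb C$ of polynomials in formal variables $\gamma_0,\dots,\gamma_{r-2}$ and all their $x$-derivatives, with derivation $\partial=\partial/\partial x$. Put $D=\frac{\sqrt{-1}}{\sqrt r}\partial$. Formal pseudodifferential operators are sums $\sum_{i\le N}a_iD^i$ with $a_i\in R$, multiplied using $D^k\cdot f=\sum_{j\ge0}\binom{k}{j}(D^jf)D^{k-j}$ for $k\in\mathbb Z$ (with $\binom{-a-1}{b}=(-1)^b\binom{a+b}{b}$). Let $Q=D^r+\sum_{i=0}^{r-2}\gamma_iD^i$. There is a unique $Q^{1/r}=D+\sum_{i\ge1}w_{-i}D^{-i}$ with $(Q^{1/r})^r=Q$; set $Q^{k/r}=(Q^{1/r})^k$, and let $\operatorname{Res}$ denote the coefficient of $D^{-1}$. For $0\le m\le r-2$ put $z_m=-\frac{r}{m+1}\operatorname{Res}(Q^{(m+1)/r})$ and $z_m^{(j)}=\partial^jz_m$. Each $\gamma_i$ is a differential polynomial in $z_0,\dots,z_{r-2}$, and the $z_m^{(j)}$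 are algebraically independent generators of $R$, so each element of $R$ is uniquely a polynomial in the $z_m^{(j)}$. $W_r(z)$ is defined as $\frac{r^2}{r+1}\operatorname{Res}(Q^{(r+1)/r})-\frac12\sum_{j=0}^{r-2}z_jz_{r-2-j}$ written in the $z_m^{(j)}$. *)

theory Defs
  imports Complex_Main "HOL-Library.Poly_Mapping"
begin

text \<open>Monomials in variables indexed by pairs (i,k); the pair (i,k) stands for the
k-th x-derivative of the i-th generator. Polynomials with complex coefficients.\<close>
type_synonym mono = "(nat \<times> nat) \<Rightarrow>\<^sub>0 nat"
type_synonym dpoly = "mono \<Rightarrow>\<^sub>0 complex"

definition var :: "nat \<times> nat \<Rightarrow> dpoly" where
  "var v = Poly_Mapping.single (Poly_Mapping.single v 1) 1"

definition cst :: "complex \<Rightarrow> dpoly" where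
  "cst c = Poly_Mapping.single 0 c"

text \<open>The derivation d/dx on R: it sends gamma_i^(k) to gamma_i^(k+1), extended by Leibniz.\<close>
definition shiftmono :: "mono \<Rightarrow> nat \<times> nat \<Rightarrow> mono" where
  "shiftmono m v = m - Poly_Mapping.single v 1 + Poly_Mapping.single (fst v, Suc (snd v)) 1"

definition dd :: "dpoly \<Rightarrow> dpoly" where
  "dd p = (\<Sum>m\<in>Poly_Mapping.keys p. \<Sum>v\<in>Poly_Mapping.keys m.
      Poly_Mapping.single (shiftmono m v) (Poly_Mapping.lookup p m * of_nat (Poly_Mapping.lookup m v)))"

definition peval :: "(nat \<times> nat \<Rightarrow> dpoly) \<Rightarrow> dpoly \<Rightarrow> dpoly" where
  "peval f P = (\<Sum>mo\<in>Poly_Mapping.keys P. cst (Poly_Mapping.lookup P mo) * (\<Prod>v\<in>Poly_Mapping.keys mo. f v ^ Poly_Mapping.lookup mo v))"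

text \<open>Pseudodifferential operators: coefficient functions int => R (coefficient of D^n);
only those with support bounded above are used.\<close>
type_synonym psdo = "int \<Rightarrow> dpoly"

definition cD :: "nat \<Rightarrow> complex" where
  "cD r = \<i> / complex_of_real (sqrt (real r))"

definition Dapp :: "nat \<Rightarrow> nat \<Rightarrow> dpoly \<Rightarrow> dpoly" where
  "Dapp r j b = cst (cD r ^ j) * (dd ^^ j) b"

text \<open>Product: (a D^i)(b D^k) = sum_j binom(i,j) a (D^j b) D^(i+k-j).\<close>
definition pmul :: "nat \<Rightarrow> psdo \<Rightarrow> psdo \<Rightarrow> psdo" where
  "pmul r A B = (\<lambda>n. \<Sum>(i, k)\<in>{(i, k). n \<le> i + k \<and> A i \<noteq> 0 \<and> B k \<noteq> 0}.
      cst ((of_int i :: complex) gchoose nat (i + k - n)) * A i * Dapp r (nat (i + k - n)) (B k))"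

definition pone :: psdo where
  "pone = (\<lambda>n. if n = 0 then 1 else 0)"

primrec ppow :: "nat \<Rightarrow> psdo \<Rightarrow> nat \<Rightarrow> psdo" where
  "ppow r A 0 = pone"
| "ppow r A (Suc n) = pmul r (ppow r A n) A"

text \<open>Q = D^r + sum_{i=0}^{r-2} gamma_i D^i, with gamma_i = var (i,0).\<close>
definition Qop :: "nat \<Rightarrow> psdo" where
  "Qop r = (\<lambda>n. if n = int r then 1
               else if 0 \<le> n \<and> n \<le> int r - 2 then var (nat n, 0) else 0)"

definition is_Qroot :: "nat \<Rightarrow> psdo \<Rightarrow> bool" where
  "is_Qroot r L \<longleftrightarrow> L 1 = 1 \<and> L 0 = 0 \<and> (\<forall>n>1. L n = 0) \<and> ppow r L r = Qop r"

definition Qroot :: "nat \<Rightarrow> psdo" where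
  "Qroot r = (THE L. is_Qroot r L)"

text \<open>Res(Q^{k/r}) = coefficient of D^(-1) in (Q^{1/r})^k.\<close>
definition ResQ :: "nat \<Rightarrow> nat \<Rightarrow> dpoly" where
  "ResQ r k = ppow r (Qroot r) k (-1)"

definition zz :: "nat \<Rightarrow> nat \<Rightarrow> dpoly" where
  "zz r m = cst (- of_nat r / of_nat (m + 1)) * ResQ r (m + 1)"

definition zvar :: "nat \<Rightarrow> nat \<times> nat \<Rightarrow> dpoly" where
  "zvar r v = (dd ^^ snd v) (zz r (fst v))"

end

theory Submission
  imports Defs "HOL-Computational_Algebra.Formal_Laurent_Series"
begin

text \<open>
Setting all derivatives \<gamma>_i^(k), k \<ge> 1, to zero is a ring homomorphism; as it kills every
term of the Leibniz rule but the zeroth-order one, it turns operator products into products of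
commuting Laurent series in D. For the image l of Q^(1/r) write D = l + \<Sum>_m c_m l^(-m-1).
Then res l^k = -k c_(k-1), and res (D^2 \<partial>_D l^r) = 0, which holds because l^r is a
polynomial in D, gives 2 c_r + \<Sum>_m c_m c_(r-2-m) = 0. As z_m maps to r c_m, the difference
r^2/(r+1) Res Q^((r+1)/r) - 1/2 \<Sum>_j z_j z_(r-2-j) maps to 0.

Triangularity, Res Q^(k/r) = (k/r) \<gamma>_(r-1-k) modulo polynomials in the \<gamma>_i^(l) with
i \<ge> r-k, shows by downward induction that every \<gamma>_i^(l) is a polynomial in the z_m^(j).
Hence each element differs from its image by an element of the ideal generated by the
derivatives, and that ideal consists of the polynomials in the z_m^(j) all of whose monomials
contain some z_m^(j) with j \<ge> 1.
\<close>

lemma cst_add: "cst (a + b) = cst a + cst b"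
  by (simp add: cst_def single_add)

lemma cst_mult: "cst (a * b) = cst a * cst b"
  by (simp add: cst_def mult_single)

lemma cst_0 [simp]: "cst 0 = 0"
  by (simp add: cst_def)

lemma cst_1 [simp]: "cst 1 = 1"
  by (simp add: cst_def)

lemma cst_of_nat: "cst (of_nat n) = of_nat n"
  by (simp add: cst_def)

lemma cst_numeral: "cst (numeral n) = numeral n"
  by (simp add: cst_def)

lemma cst_minus: "cst (- a) = - cst a"
  by (simp add: cst_def single_uminus)

lemma cst_power: "cst (a ^ n) = cst a ^ n"
  by (induct n) (simp_all add: cst_mult)

lemma of_nat_mult_dpoly_eq_iff:
  assumes "n \<noteq> 0"
  shows "of_nat n * x = (y :: dpoly) \<longleftrightarrow> x = cst (1 / of_nat n) * y"
proof -
  have inv: "cst (1 / of_nat n) * of_nat n = (1 :: dpoly)"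
    using assms by (simp add: cst_of_nat[symmetric] cst_mult[symmetric])
  have "x = cst (1 / of_nat n) * y" if "of_nat n * x = y"
  proof -
    have "x = (cst (1 / of_nat n) * of_nat n) * x" by (simp add: inv)
    then show ?thesis by (simp only: mult.assoc that)
  qed
  moreover have "of_nat n * x = y" if "x = cst (1 / of_nat n) * y"
  proof -
    have "of_nat n * x = (cst (1 / of_nat n) * of_nat n) * y"
      by (simp only: that mult.assoc mult.left_commute[of "of_nat n"])
    then show ?thesis by (simp add: inv)
  qed
  ultimately show ?thesis by blast
qed

lemma of_nat_mult_dpoly_cancel:
  assumes "n \<noteq> 0" "of_nat n * x = of_nat n * (y :: dpoly)"
  shows "x = y"
  using of_nat_mult_dpoly_eq_iff[OF assms(1), of x "of_nat n * y"]
    of_nat_mult_dpoly_eq_iff[OF assms(1), of y "of_nat n * y"] assms(2)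
  by simp

lemma poly_mapping_single_induct:
  assumes "P 0" and "\<And>p m c. P p \<Longrightarrow> P (p + Poly_Mapping.single m c)"
  shows "P (q :: 'a \<Rightarrow>\<^sub>0 'b::monoid_add)"
proof (induct q rule: update_induct)
  case const
  then show ?case using assms by simp
next
  case (update f a b)
  have "Poly_Mapping.update a b f = f + Poly_Mapping.single a b"
    using update(1)
    by (intro poly_mapping_eqI) (auto simp: lookup_update lookup_add lookup_single in_keys_iff when_def)
  with update assms(2) show ?case by simp
qed

lemma keys_add_nat:
  "Poly_Mapping.keys (m + n :: 'a \<Rightarrow>\<^sub>0 nat) = Poly_Mapping.keys m \<union> Poly_Mapping.keys n"
  by (auto simp: in_keys_iff lookup_add)

definition eval_mono :: "(nat \<times> nat \<Rightarrow> dpoly) \<Rightarrow> mono \<Rightarrow> dpoly" where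
  "eval_mono f mo = (\<Prod>v\<in>Poly_Mapping.keys mo. f v ^ Poly_Mapping.lookup mo v)"

lemma eval_mono_superset:
  assumes "finite K" "Poly_Mapping.keys mo \<subseteq> K"
  shows "eval_mono f mo = (\<Prod>v\<in>K. f v ^ Poly_Mapping.lookup mo v)"
  unfolding eval_mono_def
  by (rule prod.mono_neutral_left) (use assms in \<open>auto simp: in_keys_iff\<close>)

lemma eval_mono_add: "eval_mono f (m + n) = eval_mono f m * eval_mono f n"
proof -
  let ?K = "Poly_Mapping.keys m \<union> Poly_Mapping.keys n"
  have "eval_mono f (m + n) = (\<Prod>v\<in>?K. f v ^ Poly_Mapping.lookup (m + n) v)"
    by (rule eval_mono_superset) (auto simp: keys_add_nat)
  also have "\<dots> = (\<Prod>v\<in>?K. f v ^ Poly_Mapping.lookup m v) * (\<Prod>v\<in>?K. f v ^ Poly_Mapping.lookup n v)"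
    by (simp add: lookup_add power_add prod.distrib)
  also have "\<dots> = eval_mono f m * eval_mono f n"
    by (subst (1 2) eval_mono_superset[where K = ?K]) auto
  finally show ?thesis .
qed

lemma peval_eq_eval_mono:
  "peval f P = (\<Sum>mo\<in>Poly_Mapping.keys P. cst (Poly_Mapping.lookup P mo) * eval_mono f mo)"
  by (simp add: peval_def eval_mono_def)

lemma peval_0 [simp]: "peval f 0 = 0"
  by (simp add: peval_def)

lemma peval_add: "peval f (p + q) = peval f p + peval f q"
  unfolding peval_eq_eval_mono
  by (rule setsum_keys_plus_distrib) (simp_all add: cst_add distrib_right)

lemma peval_single: "peval f (Poly_Mapping.single m c) = cst c * eval_mono f m"
  by (simp add: peval_eq_eval_mono)

lemma peval_mult: "peval f (p * q) = peval f p * peval f q"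
proof (induct p rule: poly_mapping_single_induct)
  case (2 p m c)
  have "peval f (Poly_Mapping.single m c * q) = peval f (Poly_Mapping.single m c) * peval f q"
    by (induct q rule: poly_mapping_single_induct)
      (simp_all add: distrib_left peval_add mult_single peval_single eval_mono_add cst_mult mult_ac)
  then show ?case using 2 by (simp add: distrib_right peval_add)
qed simp

lemma peval_cst [simp]: "peval f (cst c) = cst c"
  by (simp add: cst_def peval_single eval_mono_def)

lemma peval_var [simp]: "peval f (var v) = f v"
  by (simp add: var_def peval_single eval_mono_def)

lemma peval_uminus: "peval f (- p) = - peval f p"
  using peval_add[of f p "- p"] by (simp add: minus_unique)

lemma peval_diff: "peval f (p - q) = peval f p - peval f q"
  using peval_add[of f p "- q"] by (simp add: peval_uminus)

lemma peval_sum: "peval f (sum g A) = (\<Sum>a\<in>A. peval f (g a))"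
  by (induct A rule: infinite_finite_induct) (simp_all add: peval_add)

definition dd_term :: "mono \<Rightarrow> complex \<Rightarrow> dpoly" where
  "dd_term m c = (\<Sum>v\<in>Poly_Mapping.keys m.
     Poly_Mapping.single (shiftmono m v) (c * of_nat (Poly_Mapping.lookup m v)))"

lemma dd_eq_dd_term: "dd p = (\<Sum>m\<in>Poly_Mapping.keys p. dd_term m (Poly_Mapping.lookup p m))"
  by (simp add: dd_def dd_term_def)

lemma dd_0 [simp]: "dd 0 = 0"
  by (simp add: dd_def)

lemma dd_add: "dd (p + q) = dd p + dd q"
  unfolding dd_eq_dd_term
  by (rule setsum_keys_plus_distrib) (simp_all add: dd_term_def distrib_right single_add sum.distrib)

lemma dd_single: "dd (Poly_Mapping.single m c) = dd_term m c"
  by (simp add: dd_eq_dd_term dd_term_def)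

lemma dd_term_superset:
  assumes "finite K" "Poly_Mapping.keys m \<subseteq> K"
  shows "dd_term m c =
    (\<Sum>v\<in>K. Poly_Mapping.single (shiftmono m v) (c * of_nat (Poly_Mapping.lookup m v)))"
  unfolding dd_term_def
  by (rule sum.mono_neutral_left) (use assms in \<open>auto simp: in_keys_iff\<close>)

lemma shiftmono_add:
  assumes "Poly_Mapping.lookup m v \<noteq> 0"
  shows "shiftmono (m + n) v = shiftmono m v + n"
  unfolding shiftmono_def
  by (rule poly_mapping_eqI) (use assms in \<open>auto simp: lookup_add lookup_minus lookup_single when_def\<close>)

lemma dd_term_add:
  "dd_term (m + n) (a * b) =
     dd_term m a * Poly_Mapping.single n b + Poly_Mapping.single m a * dd_term n b"
proof -
  let ?K = "Poly_Mapping.keys m \<union> Poly_Mapping.keys n"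
  let ?s = "\<lambda>mo x. Poly_Mapping.single mo x :: dpoly"
  have left: "?s (shiftmono (m + n) v) (a * of_nat (Poly_Mapping.lookup m v) * b)
      = ?s (shiftmono m v + n) (a * of_nat (Poly_Mapping.lookup m v) * b)" for v
    by (cases "Poly_Mapping.lookup m v = 0") (simp_all add: shiftmono_add)
  have right: "?s (shiftmono (m + n) v) (a * (b * of_nat (Poly_Mapping.lookup n v)))
      = ?s (m + shiftmono n v) (a * (b * of_nat (Poly_Mapping.lookup n v)))" for v
  proof (cases "Poly_Mapping.lookup n v = 0")
    case False
    then have "shiftmono (m + n) v = m + shiftmono n v"
      using shiftmono_add[of n v m] by (simp add: add.commute)
    then show ?thesis by simp
  qed simp
  have "dd_term (m + n) (a * b) =
      (\<Sum>v\<in>?K. ?s (shiftmono (m + n) v) (a * b * of_nat (Poly_Mapping.lookup (m + n) v)))"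
    by (rule dd_term_superset) (auto simp: keys_add_nat)
  also have "\<dots> = (\<Sum>v\<in>?K. ?s (shiftmono m v + n) (a * of_nat (Poly_Mapping.lookup m v) * b))
      + (\<Sum>v\<in>?K. ?s (m + shiftmono n v) (a * (b * of_nat (Poly_Mapping.lookup n v))))"
  proof -
    have "a * b * of_nat (Poly_Mapping.lookup (m + n) v)
        = a * of_nat (Poly_Mapping.lookup m v) * b + a * (b * of_nat (Poly_Mapping.lookup n v))" for v
      by (simp add: lookup_add algebra_simps)
    then show ?thesis by (simp only: single_add left right sum.distrib)
  qed
  also have "\<dots> = dd_term m a * Poly_Mapping.single n b + Poly_Mapping.single m a * dd_term n b"
    by (subst (1 2) dd_term_superset[where K = ?K])
      (auto simp: sum_distrib_left sum_distrib_right mult_single)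
  finally show ?thesis .
qed

lemma dd_mult: "dd (p * q) = dd p * q + p * dd q"
proof (induct p rule: poly_mapping_single_induct)
  case (2 p m c)
  have "dd (Poly_Mapping.single m c * q) =
      dd (Poly_Mapping.single m c) * q + Poly_Mapping.single m c * dd q"
    by (induct q rule: poly_mapping_single_induct)
      (simp_all add: distrib_left distrib_right dd_add mult_single dd_single dd_term_add)
  then show ?case using 2 by (simp add: distrib_right dd_add)
qed simp

lemma dd_cst [simp]: "dd (cst c) = 0"
  by (simp add: cst_def dd_single dd_term_def)

lemma dd_1 [simp]: "dd 1 = 0"
  using dd_cst[of 1] by simp

lemma dd_var: "dd (var (i, k)) = var (i, Suc k)"
  by (simp add: var_def dd_single dd_term_def shiftmono_def)

lemma dd_sum: "dd (sum g A) = (\<Sum>a\<in>A. dd (g a))"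
  by (induct A rule: infinite_finite_induct) (simp_all add: dd_add)

lemma dd_cst_mult: "dd (cst c * p) = cst c * dd p"
  by (simp add: dd_mult)

lemma funpow_dd_0 [simp]: "(dd ^^ j) 0 = 0"
  by (induct j) simp_all

lemma funpow_dd_var: "(dd ^^ k) (var (i, 0)) = var (i, k)"
  by (induct k) (simp_all add: dd_var)

section \<open>Products of pseudodifferential operators\<close>

definition vanishes_above :: "psdo \<Rightarrow> int \<Rightarrow> bool" where
  "vanishes_above A a \<longleftrightarrow> (\<forall>i>a. A i = 0)"

definition leibniz_term :: "nat \<Rightarrow> psdo \<Rightarrow> psdo \<Rightarrow> int \<Rightarrow> int \<Rightarrow> int \<Rightarrow> dpoly" where
  "leibniz_term r A B n i k =
     cst ((of_int i :: complex) gchoose nat (i + k - n)) * A i * Dapp r (nat (i + k - n)) (B k)"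

lemma Dapp_0 [simp]: "Dapp r 0 b = b"
  by (simp add: Dapp_def)

lemma Dapp_zero [simp]: "Dapp r j 0 = 0"
  by (simp add: Dapp_def)

lemma Dapp_cst: "j > 0 \<Longrightarrow> Dapp r j (cst c) = 0"
  by (cases j) (simp_all add: Dapp_def funpow_Suc_right del: funpow.simps)

lemma Dapp_1: "j > 0 \<Longrightarrow> Dapp r j 1 = 0"
  using Dapp_cst[of j r 1] by simp

lemma pmul_eq_sum:
  assumes A: "vanishes_above A a" and B: "vanishes_above B b"
  shows "pmul r A B n = (\<Sum>i\<in>{n-b..a}. \<Sum>k\<in>{n-i..b}. leibniz_term r A B n i k)"
proof -
  let ?S = "{(i, k). n \<le> i + k \<and> A i \<noteq> 0 \<and> B k \<noteq> 0}"
  have "?S \<subseteq> (SIGMA i:{n-b..a}. {n-i..b})"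
    using A B by (force simp: vanishes_above_def not_less[symmetric])
  then have "pmul r A B n = (\<Sum>(i, k)\<in>(SIGMA i:{n-b..a}. {n-i..b}). leibniz_term r A B n i k)"
    unfolding pmul_def leibniz_term_def by (intro sum.mono_neutral_left) auto
  then show ?thesis
    by (simp add: sum.Sigma)
qed

lemma vanishes_above_pmul:
  "vanishes_above A a \<Longrightarrow> vanishes_above B b \<Longrightarrow> vanishes_above (pmul r A B) (a + b)"
  by (auto simp: vanishes_above_def pmul_eq_sum[unfolded vanishes_above_def])

lemma vanishes_above_pone: "vanishes_above pone 0"
  by (simp add: vanishes_above_def pone_def)

lemma vanishes_above_ppow: "vanishes_above L 1 \<Longrightarrow> vanishes_above (ppow r L k) (int k)"
proof (induct k)
  case (Suc k)
  then show ?case using vanishes_above_pmul[of "ppow r L k" k L 1 r] by (simp add: add.commute)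
qed (simp add: vanishes_above_pone)

lemma pmul_pone_left:
  assumes L: "vanishes_above L a"
  shows "pmul r pone L = L"
proof
  fix n
  have coeff: "leibniz_term r pone L n i k = (if i = 0 then if k = n then L n else 0 else 0)"
    if "n \<le> i + k" for i k
    using that by (cases "nat (k - n)") (auto simp: leibniz_term_def pone_def)
  have "pmul r pone L n = (\<Sum>i\<in>{n-a..0}. \<Sum>k\<in>{n-i..a}. leibniz_term r pone L n i k)"
    by (rule pmul_eq_sum[OF vanishes_above_pone L])
  also have "\<dots> = (\<Sum>i\<in>{n-a..0}. if i = 0 then \<Sum>k\<in>{n..a}. if k = n then L n else 0 else 0)"
    by (intro sum.cong refl) (auto simp: coeff)
  also have "\<dots> = (if n \<le> a then L n else 0)"
    by (simp add: sum.delta)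
  also have "\<dots> = L n"
    using L by (auto simp: vanishes_above_def)
  finally show "pmul r pone L n = L n" .
qed

lemma ppow_1: "vanishes_above L a \<Longrightarrow> ppow r L 1 = L"
  by (simp add: pmul_pone_left)

definition Dop :: psdo where
  "Dop = (\<lambda>i. if i = 1 then 1 else 0)"

lemma vanishes_above_Dop: "vanishes_above Dop 1"
  by (simp add: vanishes_above_def Dop_def)

lemma pmul_Dop_right:
  assumes A: "vanishes_above A a"
  shows "pmul r A Dop n = A (n - 1)"
proof -
  have coeff: "leibniz_term r A Dop n i k = (if i = n - 1 then if k = 1 then A (n - 1) else 0 else 0)"
    if "n \<le> i + k" for i k
    using that by (cases "nat (i + k - n)") (auto simp: leibniz_term_def Dop_def Dapp_1)
  have "pmul r A Dop n = (\<Sum>i\<in>{n-1..a}. \<Sum>k\<in>{n-i..1}. leibniz_term r A Dop n i k)"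
    by (rule pmul_eq_sum[OF A vanishes_above_Dop])
  also have "\<dots> = (\<Sum>i\<in>{n-1..a}. if i = n - 1 then A (n - 1) else 0)"
    by (intro sum.cong refl) (auto simp: coeff)
  also have "\<dots> = (if n - 1 \<le> a then A (n - 1) else 0)"
    by (simp add: sum.delta)
  also have "\<dots> = A (n - 1)"
    using A by (auto simp: vanishes_above_def)
  finally show ?thesis .
qed

lemma ppow_Dop: "ppow r Dop k = (\<lambda>i. if i = int k then 1 else 0)"
proof (induct k)
  case (Suc k)
  have "vanishes_above (ppow r Dop k) (int k)"
    by (rule vanishes_above_ppow[OF vanishes_above_Dop])
  then show ?case
    by (auto simp: Suc pmul_Dop_right)
qed (simp add: pone_def)

lemma sum_int_head: "(a::int) \<le> b \<Longrightarrow> sum f {a..b} = f a + sum f {a+1..b}"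
proof -
  assume "a \<le> b"
  then have "{a..b} = insert a {a+1..b}" by auto
  then show ?thesis by simp
qed

lemma sum_int_last: "(a::int) \<le> b \<Longrightarrow> sum f {a..b} = sum f {a..b-1} + f b"
proof -
  assume "a \<le> b"
  then have "{a..b} = insert b {a..b-1}" by auto
  then show ?thesis by (simp add: add.commute)
qed

lemma ppow_Suc_eq_sum:
  assumes "vanishes_above L 1"
  shows "ppow r L (Suc k) n = (\<Sum>i\<in>{n-1..int k}. \<Sum>j\<in>{n-i..1}. leibniz_term r (ppow r L k) L n i j)"
  using pmul_eq_sum[OF vanishes_above_ppow[OF assms] assms] by simp

lemma ppow_leading_coeff:
  assumes "vanishes_above L 1" "L 1 = 1"
  shows "ppow r L k (int k) = 1"
proof (induct k)
  case (Suc k)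
  then show ?case
    by (subst ppow_Suc_eq_sum[OF assms(1)]) (simp add: leibniz_term_def assms(2))
qed (simp add: pone_def)

lemma ppow_coeff_cong:
  assumes L: "vanishes_above L 1" and M: "vanishes_above M 1"
    and eq: "\<And>j. j \<ge> p \<Longrightarrow> L j = M j"
  shows "m \<ge> p + int k - 1 \<Longrightarrow> ppow r L k m = ppow r M k m"
proof (induct k arbitrary: m)
  case (Suc k)
  show ?case
    unfolding ppow_Suc_eq_sum[OF L] ppow_Suc_eq_sum[OF M] leibniz_term_def
    using Suc by (intro sum.cong refl) (auto simp: eq)
qed simp

definition trunc :: "psdo \<Rightarrow> int \<Rightarrow> psdo" where
  "trunc L n = (\<lambda>i. if i > - n then L i else 0)"

lemma vanishes_above_trunc: "vanishes_above L 1 \<Longrightarrow> vanishes_above (trunc L n) 1"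
  by (simp add: vanishes_above_def trunc_def)

text \<open>The two sums involve only coefficients \<open>X j\<close> with \<open>j > -n\<close>.\<close>

lemma ppow_Suc_coeff_split:
  assumes X: "vanishes_above X 1" "X 1 = 1" and n: "n \<ge> 1"
  shows "ppow r X (Suc k) (int k - n) = ppow r X k (int k - 1 - n) + X (- n)
    + (\<Sum>i\<in>{int k - n..int k - 1}. \<Sum>j\<in>{int k - n - i..1}. leibniz_term r (ppow r X k) X (int k - n) i j)
    + (\<Sum>j\<in>{1 - n..1}. leibniz_term r (ppow r X k) X (int k - n) (int k) j)"
proof -
  let ?t = "leibniz_term r (ppow r X k) X (int k - n)"
  let ?row = "\<lambda>i. \<Sum>j\<in>{int k - n - i..1}. ?t i j"
  have "ppow r X (Suc k) (int k - n) = (\<Sum>i\<in>{int k - n - 1..int k}. ?row i)"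
    by (subst ppow_Suc_eq_sum[OF X(1)]) simp
  also have "\<dots> = ?row (int k - n - 1) + (\<Sum>i\<in>{int k - n..int k}. ?row i)"
    using n by (subst sum_int_head) auto
  also have "(\<Sum>i\<in>{int k - n..int k}. ?row i) = (\<Sum>i\<in>{int k - n..int k - 1}. ?row i) + ?row (int k)"
    using n by (subst sum_int_last) auto
  also have "?row (int k - n - 1) = ppow r X k (int k - 1 - n)"
    by (simp add: leibniz_term_def X(2) algebra_simps)
  also have "?row (int k) = X (- n) + (\<Sum>j\<in>{1 - n..1}. ?t (int k) j)"
    using n by (simp add: sum_int_head leibniz_term_def ppow_leading_coeff[OF X] algebra_simps)
  finally show ?thesis
    by (simp add: algebra_simps)
qed

lemma ppow_coeff_trunc:
  assumes L: "vanishes_above L 1" "L 1 = 1" and n: "n \<ge> 1" and k: "k \<ge> 1"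
  shows "ppow r L k (int k - 1 - n) = ppow r (trunc L n) k (int k - 1 - n) + of_nat k * L (- n)"
  using k
proof (induct k rule: nat_induct_at_least)
  case base
  have T: "vanishes_above (trunc L n) 1" by (rule vanishes_above_trunc[OF L(1)])
  show ?case
    unfolding ppow_1[OF L(1)] ppow_1[OF T] by (simp add: trunc_def)
next
  case (Suc k)
  let ?T = "trunc L n"
  have T: "vanishes_above ?T 1" "?T 1 = 1"
    using vanishes_above_trunc[OF L(1)] L(2) n by (simp_all add: trunc_def)
  have agree: "L j = ?T j" if "j \<ge> 1 - n" for j
    using that by (simp add: trunc_def)
  have ppow_agree: "ppow r L k i = ppow r ?T k i" if "i \<ge> int k - n" for i
    using that by (intro ppow_coeff_cong[OF L(1) T(1) agree, of "1 - n"]) auto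
  have idx: "int (Suc k) - 1 - n = int k - n"
    by simp
  have middle: "(\<Sum>i\<in>{int k - n..int k - 1}. \<Sum>j\<in>{int k - n - i..1}. leibniz_term r (ppow r L k) L (int k - n) i j)
      = (\<Sum>i\<in>{int k - n..int k - 1}. \<Sum>j\<in>{int k - n - i..1}. leibniz_term r (ppow r ?T k) ?T (int k - n) i j)"
    by (intro sum.cong refl) (simp add: leibniz_term_def agree ppow_agree)
  have top: "(\<Sum>j\<in>{1 - n..1}. leibniz_term r (ppow r L k) L (int k - n) (int k) j)
      = (\<Sum>j\<in>{1 - n..1}. leibniz_term r (ppow r ?T k) ?T (int k - n) (int k) j)"
    using n by (intro sum.cong refl) (simp add: leibniz_term_def agree ppow_agree)
  show ?case
    unfolding idx ppow_Suc_coeff_split[OF L n] ppow_Suc_coeff_split[OF T n] Suc(2) middle top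
    by (simp add: trunc_def algebra_simps)
qed

section \<open>The r-th root of Q\<close>

text \<open>By \<open>ppow_coeff_trunc\<close>, the coefficient of D^(-n-1) enters the coefficient of
D^(r-2-n) of the r-th power linearly with factor r; it is chosen to make the latter agree with Q.\<close>

primrec qroot_seq :: "nat \<Rightarrow> nat \<Rightarrow> psdo" where
  "qroot_seq r 0 = Dop"
| "qroot_seq r (Suc n) = (\<lambda>i. if i = - int n - 1
      then cst (1 / of_nat r) * (Qop r (int r - 2 - int n) - ppow r (qroot_seq r n) r (int r - 2 - int n))
      else qroot_seq r n i)"

lemma qroot_seq_basic:
  "vanishes_above (qroot_seq r n) 1" "qroot_seq r n 1 = 1" "qroot_seq r n 0 = 0"
  by (induct n) (auto simp: vanishes_above_def Dop_def)

lemma qroot_seq_below: "i < - int n \<Longrightarrow> qroot_seq r n i = 0"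
  by (induct n) (auto simp: Dop_def)

lemma qroot_seq_stable: "i \<ge> - int n \<Longrightarrow> n \<le> N \<Longrightarrow> qroot_seq r N i = qroot_seq r n i"
  by (induct N) (auto simp: le_Suc_eq)

lemma trunc_qroot_seq_Suc: "trunc (qroot_seq r (Suc n)) (int n + 1) = qroot_seq r n"
  by (auto simp: trunc_def qroot_seq_below fun_eq_iff)

lemma ppow_qroot_seq_Suc:
  assumes r: "r \<ge> 1"
  shows "ppow r (qroot_seq r (Suc n)) r (int r - 2 - int n) = Qop r (int r - 2 - int n)"
proof -
  let ?L = "qroot_seq r (Suc n)" and ?m = "int r - 2 - int n"
  have L: "vanishes_above ?L 1" "?L 1 = 1"
    by (rule qroot_seq_basic)+
  have idx: "int r - 1 - (int n + 1) = ?m"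
    by simp
  have "ppow r ?L r ?m = ppow r (qroot_seq r n) r ?m + of_nat r * ?L (- (int n + 1))"
    using ppow_coeff_trunc[OF L, of "int n + 1" r] r
    by (simp only: idx trunc_qroot_seq_Suc)
  also have "of_nat r * ?L (- (int n + 1)) = Qop r ?m - ppow r (qroot_seq r n) r ?m"
    using r by (subst of_nat_mult_dpoly_eq_iff) simp_all
  finally show ?thesis
    by simp
qed

definition qroot_lim :: "nat \<Rightarrow> psdo" where
  "qroot_lim r = (\<lambda>i. qroot_seq r (nat (- i)) i)"

lemma qroot_lim_eq: "i \<ge> - int n \<Longrightarrow> qroot_lim r i = qroot_seq r n i"
  unfolding qroot_lim_def by (rule qroot_seq_stable[symmetric]) auto

lemma qroot_lim_basic:
  "vanishes_above (qroot_lim r) 1" "qroot_lim r 1 = 1" "qroot_lim r 0 = 0"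
  using qroot_seq_basic[of r 0] qroot_lim_eq[of 0]
  by (auto simp: vanishes_above_def simp del: qroot_seq.simps)

lemma ppow_qroot_lim_below_top:
  assumes r: "r \<ge> 2"
  shows "ppow r (qroot_lim r) r (int r - 1 - int n) = Qop r (int r - 1 - int n)"
proof -
  have "ppow r (qroot_lim r) r (int r - 1 - int n) = ppow r (qroot_seq r n) r (int r - 1 - int n)"
    by (rule ppow_coeff_cong[OF qroot_lim_basic(1) qroot_seq_basic(1), of "- int n"])
      (auto simp: qroot_lim_eq)
  also have "\<dots> = Qop r (int r - 1 - int n)"
  proof (cases n)
    case 0
    then show ?thesis using r by (simp add: ppow_Dop Qop_def)
  next
    case (Suc n')
    have idx: "int r - 1 - int n = int r - 2 - int n'"
      using Suc by simp
    show ?thesis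
      unfolding idx unfolding Suc by (rule ppow_qroot_seq_Suc) (use r in simp)
  qed
  finally show ?thesis .
qed

lemma is_Qroot_qroot_lim:
  assumes r: "r \<ge> 2"
  shows "is_Qroot r (qroot_lim r)"
proof -
  note L = qroot_lim_basic
  have "ppow r (qroot_lim r) r m = Qop r m" for m
  proof -
    have "m > int r \<or> m = int r \<or> m = int r - 1 - int (nat (int r - 1 - m))"
      by auto
    then consider "m > int r" | "m = int r" | n where "m = int r - 1 - int n"
      by blast
    then show ?thesis
    proof cases
      case 1
      then show ?thesis
        using vanishes_above_ppow[OF L(1), of r r] r by (auto simp: vanishes_above_def Qop_def)
    next
      case 2
      then show ?thesis
        using ppow_leading_coeff[OF L(1,2)] by (simp add: Qop_def)
    qed (simp add: ppow_qroot_lim_below_top[OF r])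
  qed
  then show ?thesis
    using L by (auto simp: is_Qroot_def vanishes_above_def)
qed

lemma is_Qroot_basic:
  assumes "is_Qroot r L"
  shows "vanishes_above L 1" "L 1 = 1" "L 0 = 0" "ppow r L r = Qop r"
  using assms unfolding is_Qroot_def vanishes_above_def by blast+

lemma is_Qroot_coeff_determined:
  assumes r: "r \<ge> 1" and n: "n \<ge> 1" and L1: "is_Qroot r L1" and L2: "is_Qroot r L2"
    and trunc_eq: "trunc L1 n = trunc L2 n"
  shows "L1 (- n) = L2 (- n)"
proof -
  let ?c = "int r - 1 - n"
  have split: "ppow r L r ?c = ppow r (trunc L n) r ?c + of_nat r * L (- n)" if "is_Qroot r L" for L
    by (rule ppow_coeff_trunc[OF is_Qroot_basic(1,2)[OF that]]) (use n r in auto)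
  have "ppow r (trunc L1 n) r ?c + of_nat r * L1 (- n) = ppow r L1 r ?c"
    by (rule split[OF L1, symmetric])
  also have "\<dots> = ppow r L2 r ?c"
    by (simp only: is_Qroot_basic(4)[OF L1] is_Qroot_basic(4)[OF L2])
  also have "\<dots> = ppow r (trunc L1 n) r ?c + of_nat r * L2 (- n)"
    by (simp only: split[OF L2] trunc_eq)
  finally have "of_nat r * L1 (- n) = of_nat r * L2 (- n)"
    by (rule add_left_imp_eq)
  then show ?thesis
    by (rule of_nat_mult_dpoly_cancel[rotated]) (use r in simp)
qed

lemma is_Qroot_unique:
  assumes r: "r \<ge> 1" and L1: "is_Qroot r L1" and L2: "is_Qroot r L2"
  shows "L1 = L2"
proof -
  have nonneg: "L1 i = L2 i" if "i \<ge> 0" for i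
    using that is_Qroot_basic[OF L1] is_Qroot_basic[OF L2] unfolding vanishes_above_def
    by (cases "i = 0 \<or> i = 1") auto
  have neg: "L1 (- int n) = L2 (- int n)" for n
  proof (induct n rule: less_induct)
    case (less n)
    show ?case
    proof (cases "n = 0")
      case False
      have "L1 i = L2 i" if "i > - int n" for i
        using that nonneg less[of "nat (- i)"] by (cases "i \<ge> 0") auto
      then have "trunc L1 (int n) = trunc L2 (int n)"
        by (simp add: trunc_def fun_eq_iff)
      then show ?thesis
        using False by (intro is_Qroot_coeff_determined[OF r _ L1 L2]) auto
    qed (simp add: nonneg)
  qed
  show ?thesis
  proof
    fix i
    show "L1 i = L2 i"
      using nonneg neg[of "nat (- i)"] by (cases "i \<ge> 0") auto
  qed
qed

lemma is_Qroot_Qroot: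
  assumes "r \<ge> 2"
  shows "is_Qroot r (Qroot r)"
  unfolding Qroot_def
  by (rule theI[of "is_Qroot r", OF is_Qroot_qroot_lim[OF assms]])
    (use is_Qroot_unique[of r _ "qroot_lim r"] is_Qroot_qroot_lim[OF assms] assms in simp)

lemma Qroot_basic:
  assumes "r \<ge> 2"
  shows "vanishes_above (Qroot r) 1" "Qroot r 1 = 1" "Qroot r 0 = 0" "ppow r (Qroot r) r = Qop r"
  by (rule is_Qroot_basic[OF is_Qroot_Qroot[OF assms]])+

section \<open>Triangularity of the residues\<close>

inductive_set gamma_alg :: "nat \<Rightarrow> nat \<Rightarrow> dpoly set" for r p where
  gamma_alg_cst: "cst c \<in> gamma_alg r p"
| gamma_alg_var: "p \<le> i \<Longrightarrow> i \<le> r - 2 \<Longrightarrow> var (i, k) \<in> gamma_alg r p"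
| gamma_alg_add: "a \<in> gamma_alg r p \<Longrightarrow> b \<in> gamma_alg r p \<Longrightarrow> a + b \<in> gamma_alg r p"
| gamma_alg_mult: "a \<in> gamma_alg r p \<Longrightarrow> b \<in> gamma_alg r p \<Longrightarrow> a * b \<in> gamma_alg r p"

lemma gamma_alg_0 [simp]: "0 \<in> gamma_alg r p"
  using gamma_alg_cst[of 0] by simp

lemma gamma_alg_1 [simp]: "1 \<in> gamma_alg r p"
  using gamma_alg_cst[of 1] by simp

lemma gamma_alg_cst_mult: "a \<in> gamma_alg r p \<Longrightarrow> cst c * a \<in> gamma_alg r p"
  by (rule gamma_alg_mult[OF gamma_alg_cst])

lemma gamma_alg_uminus: "a \<in> gamma_alg r p \<Longrightarrow> - a \<in> gamma_alg r p"
  using gamma_alg_cst_mult[of a r p "- 1"] by (simp add: cst_minus)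

lemma gamma_alg_diff: "a \<in> gamma_alg r p \<Longrightarrow> b \<in> gamma_alg r p \<Longrightarrow> a - b \<in> gamma_alg r p"
  unfolding diff_conv_add_uminus by (intro gamma_alg_add gamma_alg_uminus)

lemma gamma_alg_sum: "(\<And>x. x \<in> A \<Longrightarrow> f x \<in> gamma_alg r p) \<Longrightarrow> sum f A \<in> gamma_alg r p"
  by (induct A rule: infinite_finite_induct) (auto intro: gamma_alg_add)

lemma gamma_alg_antimono: "x \<in> gamma_alg r p' \<Longrightarrow> p \<le> p' \<Longrightarrow> x \<in> gamma_alg r p"
  by (induct x rule: gamma_alg.induct) (auto intro: gamma_alg.intros)

lemma gamma_alg_dd: "x \<in> gamma_alg r p \<Longrightarrow> dd x \<in> gamma_alg r p"
  by (induct x rule: gamma_alg.induct) (auto intro: gamma_alg.intros simp: dd_add dd_mult dd_var)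

lemma gamma_alg_funpow_dd: "x \<in> gamma_alg r p \<Longrightarrow> (dd ^^ j) x \<in> gamma_alg r p"
  by (induct j) (auto intro: gamma_alg_dd)

lemma gamma_alg_Dapp: "x \<in> gamma_alg r p \<Longrightarrow> Dapp r' j x \<in> gamma_alg r p"
  unfolding Dapp_def by (intro gamma_alg_cst_mult gamma_alg_funpow_dd)

lemma Qop_in_gamma_alg: "n \<ge> 1 \<Longrightarrow> Qop r (int r - 1 - int n) \<in> gamma_alg r (r - 1 - n)"
  by (auto simp: Qop_def intro!: gamma_alg_var)

definition coeffs_in :: "psdo \<Rightarrow> dpoly set \<Rightarrow> bool" where
  "coeffs_in A S \<longleftrightarrow> (\<forall>i. A i \<in> S)"

lemma coeffs_in_pmul:
  assumes "vanishes_above A a" "vanishes_above B b"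
    and "coeffs_in A (gamma_alg r p)" "coeffs_in B (gamma_alg r p)"
  shows "coeffs_in (pmul r' A B) (gamma_alg r p)"
  using assms(3,4)
  unfolding coeffs_in_def pmul_eq_sum[OF assms(1,2)] leibniz_term_def
  by (intro allI gamma_alg_sum gamma_alg_mult gamma_alg_cst_mult gamma_alg_Dapp) auto

lemma coeffs_in_ppow:
  assumes "vanishes_above L 1" "coeffs_in L (gamma_alg r p)"
  shows "coeffs_in (ppow r' L k) (gamma_alg r p)"
proof (induct k)
  case (Suc k)
  then show ?case
    using coeffs_in_pmul[OF vanishes_above_ppow[OF assms(1)] assms(1) _ assms(2)] by simp
qed (simp add: coeffs_in_def pone_def)

lemma Qroot_nonneg: "r \<ge> 2 \<Longrightarrow> i \<ge> 0 \<Longrightarrow> Qroot r i = (if i = 1 then 1 else 0)"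
  using Qroot_basic[of r] by (cases "i = 0") (auto simp: vanishes_above_def)

lemma Qroot_coeff_eq:
  assumes r: "r \<ge> 2" and n: "n \<ge> 1"
  shows "Qroot r (- n) =
    cst (1 / of_nat r) * (Qop r (int r - 1 - n) - ppow r (trunc (Qroot r) n) r (int r - 1 - n))"
proof -
  have "Qop r (int r - 1 - n) = ppow r (trunc (Qroot r) n) r (int r - 1 - n) + of_nat r * Qroot r (- n)"
    using ppow_coeff_trunc[OF Qroot_basic(1,2)[OF r] n, of r r] Qroot_basic(4)[OF r] r by simp
  then have "of_nat r * Qroot r (- n) = Qop r (int r - 1 - n) - ppow r (trunc (Qroot r) n) r (int r - 1 - n)"
    by (simp add: eq_diff_eq add.commute)
  then show ?thesis
    by (subst (asm) of_nat_mult_dpoly_eq_iff) (use r in auto)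
qed

lemma coeffs_in_trunc_Qroot:
  assumes r: "r \<ge> 2"
    and below: "\<And>j. 1 \<le> j \<Longrightarrow> j < n \<Longrightarrow> Qroot r (- int j) \<in> gamma_alg r (r - 1 - j)"
  shows "coeffs_in (trunc (Qroot r) (int n)) (gamma_alg r (r - n))"
  unfolding coeffs_in_def
proof
  fix i
  show "trunc (Qroot r) (int n) i \<in> gamma_alg r (r - n)"
  proof (cases "i > - int n \<and> i < 0")
    case True
    then have "Qroot r (- int (nat (- i))) \<in> gamma_alg r (r - 1 - nat (- i))"
      by (intro below) auto
    then have "Qroot r i \<in> gamma_alg r (r - n)"
      using True by (auto elim: gamma_alg_antimono)
    then show ?thesis
      by (simp add: trunc_def)
  qed (auto simp: trunc_def Qroot_nonneg[OF r])
qed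

lemma Qroot_coeff_in_gamma_alg:
  assumes r: "r \<ge> 2"
  shows "n \<ge> 1 \<Longrightarrow> Qroot r (- int n) \<in> gamma_alg r (r - 1 - n)"
proof (induct n rule: less_induct)
  case (less n)
  have "coeffs_in (trunc (Qroot r) (int n)) (gamma_alg r (r - n))"
    using less by (intro coeffs_in_trunc_Qroot[OF r]) auto
  then have "coeffs_in (ppow r (trunc (Qroot r) (int n)) r) (gamma_alg r (r - n))"
    by (rule coeffs_in_ppow[OF vanishes_above_trunc[OF Qroot_basic(1)[OF r]]])
  then have "ppow r (trunc (Qroot r) (int n)) r (int r - 1 - int n) \<in> gamma_alg r (r - 1 - n)"
    unfolding coeffs_in_def using gamma_alg_antimono[of _ r "r - n" "r - 1 - n"] by simp
  moreover have "Qop r (int r - 1 - int n) \<in> gamma_alg r (r - 1 - n)"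
    using less.prems by (rule Qop_in_gamma_alg)
  moreover have "Qroot r (- int n) = cst (1 / of_nat r) *
      (Qop r (int r - 1 - int n) - ppow r (trunc (Qroot r) (int n)) r (int r - 1 - int n))"
    using less.prems by (intro Qroot_coeff_eq[OF r]) simp
  ultimately show ?case
    by (simp only:) (intro gamma_alg_cst_mult gamma_alg_diff)
qed

lemma coeffs_in_Qroot:
  assumes r: "r \<ge> 2"
  shows "coeffs_in (Qroot r) (gamma_alg r 0)"
  unfolding coeffs_in_def
proof
  fix i
  show "Qroot r i \<in> gamma_alg r 0"
  proof (cases "i < 0")
    case True
    then have "Qroot r (- int (nat (- i))) \<in> gamma_alg r (r - 1 - nat (- i))"
      by (intro Qroot_coeff_in_gamma_alg[OF r]) auto
    then show ?thesis
      using True by (auto elim: gamma_alg_antimono)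
  qed (simp add: Qroot_nonneg[OF r])
qed

lemma ResQ_in_gamma_alg: "r \<ge> 2 \<Longrightarrow> ResQ r k \<in> gamma_alg r 0"
  using coeffs_in_ppow[OF Qroot_basic(1) coeffs_in_Qroot, of r r k] by (simp add: ResQ_def coeffs_in_def)

lemma ResQ_leading_term:
  assumes r: "r \<ge> 2" and k: "k \<ge> 1"
  shows "ResQ r k - cst (of_nat k / of_nat r) * Qop r (int r - 1 - int k) \<in> gamma_alg r (r - k)"
proof -
  let ?T = "trunc (Qroot r) (int k)"
  have T: "vanishes_above ?T 1" "coeffs_in ?T (gamma_alg r (r - k))"
    using vanishes_above_trunc[OF Qroot_basic(1)[OF r]] Qroot_coeff_in_gamma_alg[OF r]
    by (auto intro: coeffs_in_trunc_Qroot[OF r])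
  have "ResQ r k = ppow r ?T k (-1) + of_nat k * Qroot r (- int k)"
    using ppow_coeff_trunc[OF Qroot_basic(1,2)[OF r], of "int k" k r] k by (simp add: ResQ_def)
  also have "of_nat k * Qroot r (- int k) = cst (of_nat k / of_nat r) * Qop r (int r - 1 - int k)
      - cst (of_nat k / of_nat r) * ppow r ?T r (int r - 1 - int k)"
    using k by (simp add: Qroot_coeff_eq[OF r] cst_of_nat[symmetric] cst_mult[symmetric]
        right_diff_distrib mult.assoc[symmetric])
  finally have "ResQ r k - cst (of_nat k / of_nat r) * Qop r (int r - 1 - int k) =
      ppow r ?T k (-1) - cst (of_nat k / of_nat r) * ppow r ?T r (int r - 1 - int k)"
    by simp
  also have "\<dots> \<in> gamma_alg r (r - k)"
    using coeffs_in_ppow[OF T] by (auto simp: coeffs_in_def intro!: gamma_alg_diff gamma_alg_cst_mult)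
  finally show ?thesis .
qed

definition zpoly :: "nat \<Rightarrow> dpoly set" where
  "zpoly r = {P. \<forall>mo\<in>Poly_Mapping.keys P. \<forall>v\<in>Poly_Mapping.keys mo. fst v \<le> r - 2}"

definition zpoly_deriv :: "nat \<Rightarrow> dpoly set" where
  "zpoly_deriv r =
     {W \<in> zpoly r. \<forall>mo\<in>Poly_Mapping.keys W. \<exists>v\<in>Poly_Mapping.keys mo. 1 \<le> snd v}"

definition z_alg :: "nat \<Rightarrow> dpoly set" where
  "z_alg r = peval (zvar r) ` zpoly r"

definition z_deriv_ideal :: "nat \<Rightarrow> dpoly set" where
  "z_deriv_ideal r = peval (zvar r) ` zpoly_deriv r"

lemma zpoly_add: "P \<in> zpoly r \<Longrightarrow> Q \<in> zpoly r \<Longrightarrow> P + Q \<in> zpoly r"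
  using keys_add[of P Q] by (auto simp: zpoly_def)

lemma zpoly_mult: "P \<in> zpoly r \<Longrightarrow> Q \<in> zpoly r \<Longrightarrow> P * Q \<in> zpoly r"
  using keys_mult[of P Q] by (fastforce simp: zpoly_def keys_add_nat)

lemma zpoly_cst: "cst c \<in> zpoly r"
  by (simp add: zpoly_def cst_def)

lemma zpoly_var: "fst v \<le> r - 2 \<Longrightarrow> var v \<in> zpoly r"
  by (simp add: zpoly_def var_def)

lemma zpoly_sum: "(\<And>x. x \<in> A \<Longrightarrow> f x \<in> zpoly r) \<Longrightarrow> sum f A \<in> zpoly r"
  using zpoly_cst[of 0 r] by (induct A rule: infinite_finite_induct) (simp_all add: zpoly_add)

lemma zpoly_deriv_add: "P \<in> zpoly_deriv r \<Longrightarrow> Q \<in> zpoly_deriv r \<Longrightarrow> P + Q \<in> zpoly_deriv r"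
  using keys_add[of P Q] zpoly_add[of P r Q] by (auto simp: zpoly_deriv_def)

lemma zpoly_deriv_mult: "P \<in> zpoly r \<Longrightarrow> Q \<in> zpoly_deriv r \<Longrightarrow> P * Q \<in> zpoly_deriv r"
  using keys_mult[of P Q] zpoly_mult[of P r Q]
  by (fastforce simp: zpoly_deriv_def keys_add_nat)

lemma zpoly_deriv_var: "fst v \<le> r - 2 \<Longrightarrow> snd v \<ge> 1 \<Longrightarrow> var v \<in> zpoly_deriv r"
  by (auto simp: zpoly_deriv_def zpoly_def var_def)

lemma z_alg_add: "x \<in> z_alg r \<Longrightarrow> y \<in> z_alg r \<Longrightarrow> x + y \<in> z_alg r"
  by (auto simp: z_alg_def peval_add[symmetric] intro!: imageI zpoly_add)

lemma z_alg_mult: "x \<in> z_alg r \<Longrightarrow> y \<in> z_alg r \<Longrightarrow> x * y \<in> z_alg r"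
  by (auto simp: z_alg_def peval_mult[symmetric] intro!: imageI zpoly_mult)

lemma z_alg_cst: "cst c \<in> z_alg r"
  using imageI[OF zpoly_cst, of "peval (zvar r)" c r] by (simp add: z_alg_def)

lemma z_alg_zvar: "m \<le> r - 2 \<Longrightarrow> zvar r (m, j) \<in> z_alg r"
  using imageI[OF zpoly_var, of "(m, j)" r "peval (zvar r)"] by (simp add: z_alg_def)

lemma z_alg_diff: "x \<in> z_alg r \<Longrightarrow> y \<in> z_alg r \<Longrightarrow> x - y \<in> z_alg r"
  using z_alg_mult[OF z_alg_cst[of "- 1"], of y r] z_alg_add[of x r "- y"]
  by (simp add: cst_minus)

lemma z_alg_power: "x \<in> z_alg r \<Longrightarrow> x ^ n \<in> z_alg r"
  using z_alg_cst[of 1 r] by (induct n) (auto intro: z_alg_mult)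

lemma z_deriv_ideal_add: "x \<in> z_deriv_ideal r \<Longrightarrow> y \<in> z_deriv_ideal r \<Longrightarrow> x + y \<in> z_deriv_ideal r"
  by (auto simp: z_deriv_ideal_def peval_add[symmetric] intro!: imageI zpoly_deriv_add)

lemma z_deriv_ideal_mult: "x \<in> z_alg r \<Longrightarrow> y \<in> z_deriv_ideal r \<Longrightarrow> x * y \<in> z_deriv_ideal r"
  by (auto simp: z_deriv_ideal_def z_alg_def peval_mult[symmetric] intro!: imageI zpoly_deriv_mult)

lemma z_deriv_ideal_0: "0 \<in> z_deriv_ideal r"
  using imageI[of 0 "zpoly_deriv r" "peval (zvar r)"]
  by (simp add: z_deriv_ideal_def zpoly_deriv_def zpoly_def)

lemma z_deriv_ideal_zvar: "m \<le> r - 2 \<Longrightarrow> j \<ge> 1 \<Longrightarrow> zvar r (m, j) \<in> z_deriv_ideal r"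
  using imageI[OF zpoly_deriv_var, of "(m, j)" r "peval (zvar r)"] by (simp add: z_deriv_ideal_def)

lemma z_deriv_ideal_subset: "z_deriv_ideal r \<subseteq> z_alg r"
  by (auto simp: z_deriv_ideal_def z_alg_def zpoly_deriv_def)

lemma dd_zvar: "dd (zvar r (m, j)) = zvar r (m, Suc j)"
  by (simp add: zvar_def)

lemma dd_power_zvar:
  assumes "m \<le> r - 2"
  shows "dd (zvar r (m, j) ^ n) \<in> z_deriv_ideal r"
proof (induct n)
  case (Suc n)
  have "dd (zvar r (m, j) ^ Suc n) =
      zvar r (m, j) ^ n * dd (zvar r (m, j)) + zvar r (m, j) * dd (zvar r (m, j) ^ n)"
    by (simp add: dd_mult mult.commute)
  then show ?case
    using Suc assms
    by (auto simp: dd_zvar intro!: z_deriv_ideal_add z_deriv_ideal_mult z_alg_power z_alg_zvar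
        z_deriv_ideal_zvar)
qed (simp add: z_deriv_ideal_0)

lemma dd_eval_mono_zvar:
  assumes "\<And>v. v \<in> Poly_Mapping.keys mo \<Longrightarrow> fst v \<le> r - 2"
  shows "dd (eval_mono (zvar r) mo) \<in> z_deriv_ideal r"
proof -
  have "dd (\<Prod>v\<in>V. zvar r v ^ e v) \<in> z_deriv_ideal r \<and> (\<Prod>v\<in>V. zvar r v ^ e v) \<in> z_alg r"
    if "finite V" "V \<subseteq> Poly_Mapping.keys mo" for V e
    using that
  proof (induct V rule: finite_induct)
    case (insert w V)
    then have w: "zvar r w \<in> z_alg r" "dd (zvar r w ^ e w) \<in> z_deriv_ideal r"
      using assms z_alg_zvar[of "fst w" r "snd w"] dd_power_zvar[of "fst w" r "snd w" "e w"] by auto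
    have "dd (\<Prod>v\<in>insert w V. zvar r v ^ e v) =
        (\<Prod>v\<in>V. zvar r v ^ e v) * dd (zvar r w ^ e w) + zvar r w ^ e w * dd (\<Prod>v\<in>V. zvar r v ^ e v)"
      using insert by (simp add: dd_mult mult.commute)
    then show ?case
      using insert w by (auto intro!: z_deriv_ideal_add z_deriv_ideal_mult z_alg_mult z_alg_power)
  qed (simp add: z_deriv_ideal_0 z_alg_cst[of 1, simplified])
  then show ?thesis
    by (simp add: eval_mono_def)
qed

lemma z_deriv_ideal_sum: "(\<And>x. x \<in> A \<Longrightarrow> f x \<in> z_deriv_ideal r) \<Longrightarrow> sum f A \<in> z_deriv_ideal r"
  by (induct A rule: infinite_finite_induct) (auto intro: z_deriv_ideal_add z_deriv_ideal_0)

lemma dd_z_alg: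
  assumes "x \<in> z_alg r"
  shows "dd x \<in> z_deriv_ideal r"
proof -
  obtain P where P: "P \<in> zpoly r" "x = peval (zvar r) P"
    using assms by (auto simp: z_alg_def)
  have "dd x =
      (\<Sum>mo\<in>Poly_Mapping.keys P. cst (Poly_Mapping.lookup P mo) * dd (eval_mono (zvar r) mo))"
    by (simp add: P(2) peval_eq_eval_mono dd_sum dd_cst_mult)
  also have "\<dots> \<in> z_deriv_ideal r"
    using P(1)
    by (intro z_deriv_ideal_sum z_deriv_ideal_mult z_alg_cst dd_eval_mono_zvar) (auto simp: zpoly_def)
  finally show ?thesis .
qed

lemma z_alg_funpow_dd: "x \<in> z_alg r \<Longrightarrow> (dd ^^ k) x \<in> z_alg r"
  by (induct k) (use dd_z_alg z_deriv_ideal_subset in auto)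

lemma z_alg_cst_mult_cancel:
  assumes "c \<noteq> 0" "cst c * x \<in> z_alg r"
  shows "x \<in> z_alg r"
proof -
  have "x = cst (1 / c) * (cst c * x)"
    using assms(1) by (simp add: mult.assoc[symmetric] cst_mult[symmetric])
  also have "\<dots> \<in> z_alg r"
    by (rule z_alg_mult[OF z_alg_cst assms(2)])
  finally show ?thesis .
qed

lemma ResQ_Suc_eq_zz:
  assumes "r \<ge> 1"
  shows "ResQ r (Suc m) = cst (- of_nat (Suc m) / of_nat r) * zz r m"
proof -
  have "(- of_nat (Suc m) / of_nat r) * (- of_nat r / of_nat (m + 1)) = (1 :: complex)"
    using assms by (simp add: field_simps of_nat_eq_0_iff flip: of_nat_Suc)
  then show ?thesis
    by (simp add: zz_def mult.assoc[symmetric] cst_mult[symmetric])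
qed

lemma gamma_alg_subset_z_alg_if_vars:
  assumes "\<And>i. p \<le> i \<Longrightarrow> i \<le> r - 2 \<Longrightarrow> var (i, 0) \<in> z_alg r"
  shows "gamma_alg r p \<subseteq> z_alg r"
proof
  fix x assume "x \<in> gamma_alg r p"
  then show "x \<in> z_alg r"
  proof (induct x rule: gamma_alg.induct)
    case (gamma_alg_cst c)
    show ?case by (rule z_alg_cst)
  next
    case (gamma_alg_var i k)
    have "(dd ^^ k) (var (i, 0)) \<in> z_alg r"
      by (rule z_alg_funpow_dd[OF assms[OF gamma_alg_var]])
    then show ?case by (simp only: funpow_dd_var)
  next
    case (gamma_alg_add a b)
    then show ?case by (blast intro: z_alg_add)
  next
    case (gamma_alg_mult a b)
    then show ?case by (blast intro: z_alg_mult)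
  qed
qed

text \<open>Downward induction on i: Res Q^(k/r) with k = r-1-i is a multiple of z_(k-1) and, by
triangularity, equals (k/r) \<gamma>_i plus a polynomial in the \<gamma>_j^(l) with j > i.\<close>

lemma var_in_z_alg:
  assumes r: "r \<ge> 2"
  shows "i \<le> r - 2 \<Longrightarrow> var (i, 0) \<in> z_alg r"
proof (induct "r - 2 - i" arbitrary: i rule: less_induct)
  case less
  define k where "k = r - 1 - i"
  have k: "k \<ge> 1" "r - k = Suc i" "Suc (r - 2 - i) = k" "int r - 1 - int k = int i"
    using less.prems r by (auto simp: k_def)
  have "var (j, 0) \<in> z_alg r" if "Suc i \<le> j" "j \<le> r - 2" for j
    by (rule less.hyps[of j]) (use that in auto)
  then have "gamma_alg r (Suc i) \<subseteq> z_alg r"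
    by (rule gamma_alg_subset_z_alg_if_vars)
  moreover have "Qop r (int i) = var (i, 0)"
    using less.prems r by (simp add: Qop_def)
  ultimately have rest: "ResQ r k - cst (of_nat k / of_nat r) * var (i, 0) \<in> z_alg r"
    using ResQ_leading_term[OF r k(1)] unfolding k(2,4) by auto
  have "ResQ r k = cst (- of_nat k / of_nat r) * zz r (r - 2 - i)"
    using ResQ_Suc_eq_zz[of r "r - 2 - i"] r by (simp only: k(3))
  also have "\<dots> \<in> z_alg r"
    using z_alg_zvar[of "r - 2 - i" r 0] by (intro z_alg_mult z_alg_cst) (simp add: zvar_def)
  finally have "ResQ r k \<in> z_alg r" .
  from z_alg_diff[OF this rest]
  have "cst (of_nat k / of_nat r) * var (i, 0) \<in> z_alg r"
    by simp
  then show ?case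
    by (rule z_alg_cst_mult_cancel[rotated]) (use k r in auto)
qed

lemma gamma_alg_subset_z_alg: "r \<ge> 2 \<Longrightarrow> gamma_alg r 0 \<subseteq> z_alg r"
  by (rule gamma_alg_subset_z_alg_if_vars) (rule var_in_z_alg)

section \<open>Dropping derivatives\<close>

definition drop_derivs :: "dpoly \<Rightarrow> dpoly" where
  "drop_derivs = peval (\<lambda>v. if snd v = 0 then var v else 0)"

lemma drop_derivs_add: "drop_derivs (a + b) = drop_derivs a + drop_derivs b"
  by (simp add: drop_derivs_def peval_add)

lemma drop_derivs_mult: "drop_derivs (a * b) = drop_derivs a * drop_derivs b"
  by (simp add: drop_derivs_def peval_mult)

lemma drop_derivs_diff: "drop_derivs (a - b) = drop_derivs a - drop_derivs b"
  by (simp add: drop_derivs_def peval_diff)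

lemma drop_derivs_0 [simp]: "drop_derivs 0 = 0"
  by (simp add: drop_derivs_def)

lemma drop_derivs_cst [simp]: "drop_derivs (cst c) = cst c"
  by (simp add: drop_derivs_def)

lemma drop_derivs_1 [simp]: "drop_derivs 1 = 1"
  using drop_derivs_cst[of 1] by simp

lemma drop_derivs_sum: "drop_derivs (sum f A) = (\<Sum>a\<in>A. drop_derivs (f a))"
  by (simp add: drop_derivs_def peval_sum)

lemma drop_derivs_var: "drop_derivs (var (i, k)) = (if k = 0 then var (i, k) else 0)"
  by (simp add: drop_derivs_def)

lemma drop_derivs_dd: "x \<in> gamma_alg r p \<Longrightarrow> drop_derivs (dd x) = 0"
  by (induct x rule: gamma_alg.induct)
    (simp_all add: dd_add dd_mult dd_var drop_derivs_add drop_derivs_mult drop_derivs_var)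

lemma drop_derivs_Dapp:
  assumes "x \<in> gamma_alg r p" "j > 0"
  shows "drop_derivs (Dapp r' j x) = 0"
proof -
  obtain j' where "j = Suc j'"
    using assms(2) by (cases j) auto
  then show ?thesis
    using drop_derivs_dd[OF gamma_alg_funpow_dd[OF assms(1), of j']]
    by (simp add: Dapp_def drop_derivs_mult)
qed

lemma drop_derivs_in_gamma_alg: "x \<in> gamma_alg r p \<Longrightarrow> drop_derivs x \<in> gamma_alg r p"
  by (induct x rule: gamma_alg.induct)
    (auto simp: drop_derivs_add drop_derivs_mult drop_derivs_var intro: gamma_alg.intros)

lemma diff_drop_derivs_in_z_deriv_ideal:
  assumes r: "r \<ge> 2"
  shows "x \<in> gamma_alg r 0 \<Longrightarrow> x - drop_derivs x \<in> z_deriv_ideal r"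
proof (induct x rule: gamma_alg.induct)
  case (gamma_alg_cst c)
  then show ?case by (simp add: z_deriv_ideal_0)
next
  case (gamma_alg_var i k)
  show ?case
  proof (cases k)
    case (Suc k')
    have "var (i, k') \<in> z_alg r"
      using gamma_alg_var gamma_alg_subset_z_alg[OF r] by (auto intro: gamma_alg.gamma_alg_var)
    then show ?thesis
      using dd_z_alg[of "var (i, k')" r] Suc by (simp add: dd_var drop_derivs_var)
  qed (simp add: drop_derivs_var z_deriv_ideal_0)
next
  case (gamma_alg_add a b)
  have "a + b - drop_derivs (a + b) = (a - drop_derivs a) + (b - drop_derivs b)"
    by (simp add: drop_derivs_add)
  then show ?case
    using gamma_alg_add by (simp only:) (intro z_deriv_ideal_add)
next
  case (gamma_alg_mult a b)
  have "a * b - drop_derivs (a * b) = b * (a - drop_derivs a) + drop_derivs a * (b - drop_derivs b)"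
    by (simp add: drop_derivs_mult algebra_simps)
  moreover have "b \<in> z_alg r" "drop_derivs a \<in> z_alg r"
    using gamma_alg_mult gamma_alg_subset_z_alg[OF r] drop_derivs_in_gamma_alg by auto
  ultimately show ?case
    using gamma_alg_mult by (simp add: z_deriv_ideal_add z_deriv_ideal_mult)
qed

section \<open>The residue identity for Laurent series\<close>

unbundle fps_syntax

(* The upper summation bound c is a separate variable so that the rule applies to goals
   in which n - b has already been simplified. *)
lemma fls_times_nth_bounded:
  fixes f g :: "'a::comm_ring_1 fls"
  assumes f: "\<And>i. i < a \<Longrightarrow> f $$ i = 0" and g: "\<And>i. i < b \<Longrightarrow> g $$ i = 0" and c: "c = n - b"
  shows "(f * g) $$ n = (\<Sum>i\<in>{a..c}. f $$ i * g $$ (n - i))"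
proof (cases "f = 0 \<or> g = 0")
  case False
  then have "a \<le> fls_subdegree f" "b \<le> fls_subdegree g"
    using fls_subdegree_geI f g by blast+
  then have "(\<Sum>i\<in>{fls_subdegree f..n - fls_subdegree g}. f $$ i * g $$ (n - i))
      = (\<Sum>i\<in>{a..c}. f $$ i * g $$ (n - i))"
    using c by (intro sum.mono_neutral_left) auto
  then show ?thesis
    by (simp add: fls_times_nth(2))
qed auto

text \<open>Laurent series in X = D^(-1): the coefficient of X^n is that of D^(-n), d/dD is
-X^2 d/dX, and the residue is the coefficient of X.\<close>

type_synonym dls = "dpoly fls"

definition Dser :: dls where
  "Dser = fls_X_inv"

definition deriv_D :: "dls \<Rightarrow> dls" where
  "deriv_D f = - (fls_X ^ 2 * fls_deriv f)"

definition res :: "dls \<Rightarrow> dpoly" where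
  "res f = f $$ 1"

lemma Dser_times_nth: "(Dser * g) $$ n = g $$ (n + 1)"
  by (simp add: Dser_def fls_X_inv_times_conv_shift)

lemma deriv_D_nth: "deriv_D f $$ n = - (of_int (n - 1) * f $$ (n - 1))"
  by (simp add: deriv_D_def fls_X_power_times_conv_shift)

lemma deriv_D_mult: "deriv_D (f * g) = deriv_D f * g + f * deriv_D g"
  by (simp add: deriv_D_def algebra_simps)

lemma deriv_D_power: "deriv_D (f ^ Suc j) = of_nat (Suc j) * f ^ j * deriv_D f"
  using fls_deriv_power[of f "Suc j"] by (simp add: deriv_D_def algebra_simps)

lemma deriv_D_Dser: "deriv_D Dser = 1"
  by (rule fls_eqI) (auto simp: deriv_D_nth Dser_def)

lemma res_deriv_D: "res (deriv_D f) = 0"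
  by (simp add: res_def deriv_D_nth)

lemma res_add: "res (f + g) = res f + res g"
  by (simp add: res_def)

lemma res_sum: "res (sum f A) = (\<Sum>a\<in>A. res (f a))"
  by (simp add: res_def fls_nth_sum)

lemma res_const_mult: "res (fls_const c * f) = c * res f"
  by (simp add: res_def)

lemma res_of_nat_mult: "res (of_nat n * f) = of_nat n * res f"
proof -
  have "(of_nat n :: dls) = fls_const (of_nat n)"
    by (simp add: fls_of_nat)
  then show ?thesis
    by (simp add: res_const_mult)
qed

definition is_D_plus_lower :: "dls \<Rightarrow> bool" where
  "is_D_plus_lower l \<longleftrightarrow> l $$ (-1) = 1 \<and> l $$ 0 = 0 \<and> (\<forall>n < -1. l $$ n = 0)"

lemma deriv_D_nth_D_plus_lower:
  assumes "is_D_plus_lower l"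
  shows "deriv_D l $$ 0 = 1" "deriv_D l $$ 1 = 0" "\<And>n. n < 0 \<Longrightarrow> deriv_D l $$ n = 0"
  using assms by (auto simp: deriv_D_nth is_D_plus_lower_def)

lemma res_power_deriv_D:
  assumes "is_D_plus_lower l"
  shows "res (l ^ j * deriv_D l) = 0"
proof -
  have "of_nat (Suc j) * res (l ^ j * deriv_D l) = res (deriv_D (l ^ Suc j))"
    by (simp only: deriv_D_power res_of_nat_mult mult.assoc)
  also have "\<dots> = of_nat (Suc j) * 0"
    by (simp add: res_deriv_D)
  finally show ?thesis
    by (rule of_nat_mult_dpoly_cancel[rotated]) simp
qed

text \<open>Expanding D = l + \<Sum>_m c_m l^(-m-1): \<open>Dexp_rem l N\<close> is what remains of D l^N after
the terms l^(N+1), c_0 l^(N-1), ..., c_(N-1) l^0; it has only positive powers of X, and its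
X-coefficient is c_N.\<close>

primrec Dexp_rem :: "dls \<Rightarrow> nat \<Rightarrow> dls" where
  "Dexp_rem l 0 = Dser - l"
| "Dexp_rem l (Suc N) = l * Dexp_rem l N - fls_const (Dexp_rem l N $$ 1)"

definition Dexp_coeff :: "dls \<Rightarrow> nat \<Rightarrow> dpoly" where
  "Dexp_coeff l N = Dexp_rem l N $$ 1"

lemma Dexp_rem_nonpos:
  assumes l: "is_D_plus_lower l"
  shows "n \<le> 0 \<Longrightarrow> Dexp_rem l N $$ n = 0"
proof (induct N arbitrary: n)
  case 0
  then show ?case
    using l by (cases "n = 0") (auto simp: is_D_plus_lower_def Dser_def)
next
  case (Suc N)
  have "(l * Dexp_rem l N) $$ n = (\<Sum>i\<in>{-1..n-1}. l $$ i * Dexp_rem l N $$ (n - i))"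
    by (rule fls_times_nth_bounded[where a = "-1" and b = 1])
      (use l Suc in \<open>auto simp: is_D_plus_lower_def\<close>)
  also have "\<dots> = (if n = 0 then Dexp_rem l N $$ 1 else 0)"
    using l Suc.prems by (cases "n = 0") (auto simp: is_D_plus_lower_def)
  finally show ?case
    by simp
qed

lemma Dexp_coeff_Suc:
  assumes l: "is_D_plus_lower l"
  shows "Dexp_coeff l (Suc N) = Dexp_rem l N $$ 2"
proof -
  have "(l * Dexp_rem l N) $$ 1 = (\<Sum>i\<in>{-1..0}. l $$ i * Dexp_rem l N $$ (1 - i))"
    by (rule fls_times_nth_bounded[where a = "-1" and b = 1])
      (use l Dexp_rem_nonpos[OF l] in \<open>auto simp: is_D_plus_lower_def\<close>)
  also have "\<dots> = Dexp_rem l N $$ 2"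
  proof -
    have "{-1..0::int} = {-1, 0}" by auto
    then show ?thesis using l by (simp add: is_D_plus_lower_def)
  qed
  finally show ?thesis
    by (simp add: Dexp_coeff_def)
qed

lemma Dser_times_power_expansion:
  "Dser * l ^ N = l ^ Suc N + (\<Sum>m<N. fls_const (Dexp_coeff l m) * l ^ (N - 1 - m)) + Dexp_rem l N"
proof (induct N)
  case (Suc N)
  have shift: "l * (\<Sum>m<N. fls_const (Dexp_coeff l m) * l ^ (N - 1 - m))
      = (\<Sum>m<N. fls_const (Dexp_coeff l m) * l ^ (Suc N - 1 - m))"
    unfolding sum_distrib_left
  proof (rule sum.cong[OF refl])
    fix m assume "m \<in> {..<N}"
    then have "Suc N - 1 - m = Suc (N - 1 - m)" by auto
    then show "l * (fls_const (Dexp_coeff l m) * l ^ (N - 1 - m)) =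
        fls_const (Dexp_coeff l m) * l ^ (Suc N - 1 - m)"
      by (simp add: mult.left_commute)
  qed
  have "Dser * l ^ Suc N = l * (Dser * l ^ N)"
    by (simp add: algebra_simps)
  also have "\<dots> = l ^ Suc (Suc N) + (\<Sum>m<N. fls_const (Dexp_coeff l m) * l ^ (Suc N - 1 - m))
      + l * Dexp_rem l N"
    unfolding Suc shift[symmetric] by (simp add: distrib_left del: power_Suc) (simp add: mult.assoc)
  also have "\<dots> = l ^ Suc (Suc N) + (\<Sum>m<Suc N. fls_const (Dexp_coeff l m) * l ^ (Suc N - 1 - m))
      + Dexp_rem l (Suc N)"
    by (simp add: Dexp_coeff_def del: power_Suc)
  finally show ?case .
qed simp

lemma res_Dexp_rem_deriv_D:
  assumes l: "is_D_plus_lower l"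
  shows "res (Dexp_rem l N * deriv_D l) = Dexp_coeff l N"
proof -
  have "(Dexp_rem l N * deriv_D l) $$ 1 = (\<Sum>i\<in>{1..1}. Dexp_rem l N $$ i * deriv_D l $$ (1 - i))"
    by (rule fls_times_nth_bounded[where a = 1 and b = 0])
      (use Dexp_rem_nonpos[OF l] deriv_D_nth_D_plus_lower[OF l] in auto)
  then show ?thesis
    using deriv_D_nth_D_plus_lower[OF l] by (simp add: res_def Dexp_coeff_def)
qed

lemma res_Dser_Dexp_rem_deriv_D:
  assumes l: "is_D_plus_lower l"
  shows "res (Dser * Dexp_rem l N * deriv_D l) = Dexp_coeff l (Suc N)"
proof -
  have "(Dexp_rem l N * deriv_D l) $$ 2 = (\<Sum>i\<in>{1..2}. Dexp_rem l N $$ i * deriv_D l $$ (2 - i))"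
    by (rule fls_times_nth_bounded[where a = 1 and b = 0])
      (use Dexp_rem_nonpos[OF l] deriv_D_nth_D_plus_lower[OF l] in auto)
  also have "\<dots> = Dexp_rem l N $$ 2"
  proof -
    have "{1..2::int} = {1, 2}" by auto
    then show ?thesis using deriv_D_nth_D_plus_lower[OF l] by simp
  qed
  finally show ?thesis
    using Dexp_coeff_Suc[OF l] by (simp add: res_def Dser_times_nth mult.assoc)
qed

lemma res_Dser_power_deriv_D:
  assumes l: "is_D_plus_lower l"
  shows "res (Dser * l ^ N * deriv_D l) = Dexp_coeff l N"
proof -
  have "Dser * l ^ N * deriv_D l = l ^ Suc N * deriv_D l
      + (\<Sum>m<N. fls_const (Dexp_coeff l m) * (l ^ (N - 1 - m) * deriv_D l)) + Dexp_rem l N * deriv_D l"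
    by (simp only: Dser_times_power_expansion distrib_right sum_distrib_right mult.assoc)
  then show ?thesis
    by (simp add: res_add res_sum res_const_mult res_power_deriv_D[OF l] res_Dexp_rem_deriv_D[OF l]
        del: power_Suc)
qed

lemma res_power:
  assumes l: "is_D_plus_lower l" and k: "k \<ge> 1"
  shows "res (l ^ k) = - (of_nat k * Dexp_coeff l (k - 1))"
proof -
  obtain j where kj: "k = Suc j"
    using k by (cases k) auto
  have "deriv_D (Dser * l ^ k) = l ^ k + of_nat k * (Dser * l ^ j * deriv_D l)"
    unfolding deriv_D_mult deriv_D_Dser kj deriv_D_power by (simp add: algebra_simps del: power_Suc)
  then have "0 = res (l ^ k) + of_nat k * res (Dser * l ^ j * deriv_D l)"
    using res_deriv_D[of "Dser * l ^ k"] by (simp only: res_add res_of_nat_mult)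
  then show ?thesis
    using res_Dser_power_deriv_D[OF l, of j] kj by (simp add: eq_neg_iff_add_eq_0 del: power_Suc)
qed

text \<open>Since l^r is a polynomial in D, the residue of D^2 \<partial>_D l^r vanishes; expanding
D^2 l^(r-1) twice by \<open>Dser_times_power_expansion\<close> turns this into a quadratic relation.\<close>

lemma Dexp_coeff_quadratic_identity:
  assumes l: "is_D_plus_lower l" and r: "r \<ge> 2" and q: "\<And>n. n > 0 \<Longrightarrow> (l ^ r) $$ n = 0"
  shows "2 * Dexp_coeff l r + (\<Sum>m<r-1. Dexp_coeff l m * Dexp_coeff l (r - 2 - m)) = 0"
proof -
  let ?c = "Dexp_coeff l"
  obtain s where rs: "r = Suc s"
    using r by (cases r) auto
  have "Dser * (Dser * deriv_D (l ^ r)) = of_nat r * (Dser * Dser * l ^ s * deriv_D l)"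
    unfolding rs deriv_D_power by (simp add: algebra_simps del: power_Suc)
  then have "of_nat r * res (Dser * Dser * l ^ s * deriv_D l) = res (Dser * (Dser * deriv_D (l ^ r)))"
    by (simp only: res_of_nat_mult)
  also have "\<dots> = 0"
    by (simp add: res_def Dser_times_nth deriv_D_nth q del: power_Suc)
  finally have vanish: "of_nat r * res (Dser * Dser * l ^ s * deriv_D l) = 0" .
  have "Dser * Dser * l ^ s * deriv_D l = Dser * l ^ Suc s * deriv_D l
      + (\<Sum>m<s. fls_const (?c m) * (Dser * l ^ (s - 1 - m) * deriv_D l)) + Dser * Dexp_rem l s * deriv_D l"
    by (simp only: mult.assoc[of Dser Dser] Dser_times_power_expansion distrib_left distrib_right
        sum_distrib_left sum_distrib_right mult.assoc mult.left_commute[of Dser])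
  then have "res (Dser * Dser * l ^ s * deriv_D l) = ?c (Suc s) + (\<Sum>m<s. ?c m * ?c (s - 1 - m)) + ?c (Suc s)"
    by (simp only: res_add res_sum res_const_mult res_Dser_power_deriv_D[OF l]
        res_Dser_Dexp_rem_deriv_D[OF l])
  then have "of_nat r * (2 * ?c r + (\<Sum>m<r-1. ?c m * ?c (r - 2 - m))) = of_nat r * 0"
    using vanish unfolding rs by (simp add: algebra_simps)
  then show ?thesis
    by (rule of_nat_mult_dpoly_cancel[rotated]) (use r in simp)
qed

section \<open>Symbols of operators\<close>

definition symbol :: "psdo \<Rightarrow> dls" where
  "symbol A = Abs_fls (\<lambda>n. drop_derivs (A (- n)))"

lemma symbol_nth:
  assumes "vanishes_above A a"
  shows "symbol A $$ n = drop_derivs (A (- n))"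
proof -
  have "\<forall>\<^sub>\<infinity>m::nat. drop_derivs (A (- (- int m))) = 0"
    unfolding MOST_nat using assms by (intro exI[of _ "nat a"]) (auto simp: vanishes_above_def)
  then show ?thesis
    by (simp add: symbol_def)
qed

lemma drop_derivs_pmul:
  assumes A: "vanishes_above A a" and B: "vanishes_above B b" and cB: "coeffs_in B (gamma_alg r 0)"
  shows "drop_derivs (pmul r' A B n) = (\<Sum>i\<in>{n-b..a}. drop_derivs (A i) * drop_derivs (B (n - i)))"
proof -
  have row: "(\<Sum>k\<in>{n-i..b}. drop_derivs (leibniz_term r' A B n i k)) = drop_derivs (A i) * drop_derivs (B (n - i))"
    if "i \<in> {n-b..a}" for i
  proof -
    have "drop_derivs (leibniz_term r' A B n i k) = 0" if "k \<in> {n - i + 1..b}" for k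
      using that cB drop_derivs_Dapp[of "B k" r 0 "nat (i + k - n)" r']
      by (simp add: leibniz_term_def drop_derivs_mult coeffs_in_def)
    then show ?thesis
      using that by (simp add: sum_int_head leibniz_term_def drop_derivs_mult)
  qed
  show ?thesis
    unfolding pmul_eq_sum[OF A B] drop_derivs_sum by (rule sum.cong[OF refl row])
qed

lemma symbol_pmul:
  assumes A: "vanishes_above A a" and B: "vanishes_above B b" and cB: "coeffs_in B (gamma_alg r 0)"
  shows "symbol (pmul r' A B) = symbol A * symbol B"
proof (rule fls_eqI)
  fix n
  have "symbol (pmul r' A B) $$ n = (\<Sum>i\<in>{- n - b..a}. drop_derivs (A i) * drop_derivs (B (- n - i)))"
    by (simp add: symbol_nth[OF vanishes_above_pmul[OF A B]] drop_derivs_pmul[OF A B cB])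
  also have "\<dots> = (\<Sum>i\<in>uminus ` {- a..n + b}. drop_derivs (A i) * drop_derivs (B (- n - i)))"
    by simp
  also have "\<dots> = (\<Sum>i\<in>{- a..n + b}. symbol A $$ i * symbol B $$ (n - i))"
    by (subst sum.reindex) (auto simp: inj_on_def symbol_nth[OF A] symbol_nth[OF B])
  also have "\<dots> = (symbol A * symbol B) $$ n"
    by (rule fls_times_nth_bounded[where a = "- a" and b = "- b", symmetric])
      (use A B in \<open>auto simp: symbol_nth vanishes_above_def\<close>)
  finally show "symbol (pmul r' A B) $$ n = (symbol A * symbol B) $$ n" .
qed

lemma symbol_pone: "symbol pone = 1"
  by (rule fls_eqI) (simp only: symbol_nth[OF vanishes_above_pone], simp add: pone_def)

lemma symbol_ppow:
  assumes "vanishes_above L 1" "coeffs_in L (gamma_alg r 0)"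
  shows "symbol (ppow r' L k) = symbol L ^ k"
proof (induct k)
  case (Suc k)
  then show ?case
    using symbol_pmul[OF vanishes_above_ppow[OF assms(1)] assms] by (simp add: mult.commute)
qed (simp add: symbol_pone)

definition Qsymbol :: "nat \<Rightarrow> dls" where
  "Qsymbol r = symbol (Qroot r)"

lemma Qsymbol_power: "r \<ge> 2 \<Longrightarrow> Qsymbol r ^ k = symbol (ppow r (Qroot r) k)"
  unfolding Qsymbol_def by (rule symbol_ppow[OF Qroot_basic(1) coeffs_in_Qroot, symmetric])

lemma Qsymbol_power_nth: "r \<ge> 2 \<Longrightarrow> (Qsymbol r ^ k) $$ n = drop_derivs (ppow r (Qroot r) k (- n))"
  by (simp add: Qsymbol_power symbol_nth[OF vanishes_above_ppow[OF Qroot_basic(1)]])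

lemma is_D_plus_lower_Qsymbol: "r \<ge> 2 \<Longrightarrow> is_D_plus_lower (Qsymbol r)"
  using Qroot_basic[of r]
  by (auto simp: is_D_plus_lower_def Qsymbol_def symbol_nth vanishes_above_def)

lemma Qsymbol_power_r_nth_pos:
  assumes r: "r \<ge> 2" and n: "n > 0"
  shows "(Qsymbol r ^ r) $$ n = 0"
  using n r by (simp add: Qsymbol_power_nth Qroot_basic(4) Qop_def)

lemma drop_derivs_ResQ:
  assumes r: "r \<ge> 2" and k: "k \<ge> 1"
  shows "drop_derivs (ResQ r k) = - (of_nat k * Dexp_coeff (Qsymbol r) (k - 1))"
  using res_power[OF is_D_plus_lower_Qsymbol[OF r] k] r
  by (simp add: res_def Qsymbol_power_nth ResQ_def)

lemma drop_derivs_zz: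
  assumes r: "r \<ge> 2"
  shows "drop_derivs (zz r m) = of_nat r * Dexp_coeff (Qsymbol r) m"
proof -
  have c: "(- of_nat r / of_nat (m + 1)) * of_nat (m + 1) = (- of_nat r :: complex)"
    by (simp del: of_nat_Suc)
  have "drop_derivs (zz r m) =
      cst (- of_nat r / of_nat (m + 1)) * (- (of_nat (m + 1) * Dexp_coeff (Qsymbol r) m))"
    by (simp add: zz_def drop_derivs_mult drop_derivs_ResQ[OF r] del: of_nat_Suc)
  also have "\<dots> = - (cst ((- of_nat r / of_nat (m + 1)) * of_nat (m + 1)) * Dexp_coeff (Qsymbol r) m)"
    by (simp only: cst_mult cst_of_nat[symmetric] mult.assoc mult_minus_right)
  also have "\<dots> = of_nat r * Dexp_coeff (Qsymbol r) m"
    unfolding c by (simp add: cst_minus cst_of_nat)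
  finally show ?thesis .
qed

lemma drop_derivs_scaled_ResQ:
  assumes r: "r \<ge> 2"
  shows "drop_derivs (cst (of_nat r ^ 2 / of_nat (r + 1)) * ResQ r (r + 1)) =
    - (of_nat r ^ 2 * Dexp_coeff (Qsymbol r) r)"
proof -
  have c: "(of_nat r ^ 2 / of_nat (r + 1)) * of_nat (r + 1) = (of_nat r ^ 2 :: complex)"
    by (simp del: of_nat_Suc)
  have "drop_derivs (cst (of_nat r ^ 2 / of_nat (r + 1)) * ResQ r (r + 1)) =
      cst (of_nat r ^ 2 / of_nat (r + 1)) * (- (of_nat (r + 1) * Dexp_coeff (Qsymbol r) r))"
    by (simp add: drop_derivs_mult drop_derivs_ResQ[OF r] del: of_nat_Suc)
  also have "\<dots> = - (cst ((of_nat r ^ 2 / of_nat (r + 1)) * of_nat (r + 1)) * Dexp_coeff (Qsymbol r) r)"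
    by (simp only: cst_mult cst_of_nat[symmetric] mult.assoc mult_minus_right)
  also have "\<dots> = - (of_nat r ^ 2 * Dexp_coeff (Qsymbol r) r)"
    unfolding c by (simp add: cst_power cst_of_nat)
  finally show ?thesis .
qed

lemma drop_derivs_residue_identity:
  assumes r: "r \<ge> 2"
  shows "drop_derivs (cst (of_nat r ^ 2 / of_nat (r + 1)) * ResQ r (r + 1)
    - cst (1/2) * (\<Sum>j=0..r-2. zz r j * zz r (r - 2 - j))) = 0"
proof -
  let ?c = "Dexp_coeff (Qsymbol r)"
  have quad: "(\<Sum>m<r-1. ?c m * ?c (r - 2 - m)) = - (2 * ?c r)"
    using Dexp_coeff_quadratic_identity[OF is_D_plus_lower_Qsymbol[OF r] r Qsymbol_power_r_nth_pos[OF r]]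
    by (simp add: eq_neg_iff_add_eq_0 add.commute)
  have "{0..r-2} = {..<r-1}"
    using r by auto
  then have sq: "(\<Sum>j=0..r-2. drop_derivs (zz r j) * drop_derivs (zz r (r - 2 - j))) =
      of_nat r ^ 2 * (\<Sum>m<r-1. ?c m * ?c (r - 2 - m))"
    by (simp add: drop_derivs_zz[OF r] sum_distrib_left power2_eq_square mult_ac)
  have half: "cst (1/2) * (2 :: dpoly) = 1"
    by (simp flip: cst_numeral cst_mult)
  have "drop_derivs (cst (of_nat r ^ 2 / of_nat (r + 1)) * ResQ r (r + 1)
        - cst (1/2) * (\<Sum>j=0..r-2. zz r j * zz r (r - 2 - j)))
      = drop_derivs (cst (of_nat r ^ 2 / of_nat (r + 1)) * ResQ r (r + 1))
        - cst (1/2) * (\<Sum>j=0..r-2. drop_derivs (zz r j) * drop_derivs (zz r (r - 2 - j)))"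
    by (simp only: drop_derivs_diff drop_derivs_mult drop_derivs_cst drop_derivs_sum)
  also have "\<dots> = - (of_nat r ^ 2 * ?c r) - cst (1/2) * (of_nat r ^ 2 * (- (2 * ?c r)))"
    unfolding drop_derivs_scaled_ResQ[OF r] sq quad ..
  also have "\<dots> = - (of_nat r ^ 2 * ?c r) + (cst (1/2) * 2) * (of_nat r ^ 2 * ?c r)"
    by (simp add: algebra_simps)
  also have "\<dots> = 0"
    unfolding half by simp
  finally show ?thesis .
qed

lemma residue_minus_quadratic_in_z_deriv_ideal:
  assumes r: "r \<ge> 2"
  shows "cst (of_nat r ^ 2 / of_nat (r + 1)) * ResQ r (r + 1)
    - cst (1/2) * (\<Sum>j=0..r-2. zz r j * zz r (r - 2 - j)) \<in> z_deriv_ideal r"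
proof -
  have "zz r j \<in> gamma_alg r 0" for j
    unfolding zz_def by (intro gamma_alg_cst_mult ResQ_in_gamma_alg[OF r])
  then have "cst (of_nat r ^ 2 / of_nat (r + 1)) * ResQ r (r + 1)
      - cst (1/2) * (\<Sum>j=0..r-2. zz r j * zz r (r - 2 - j)) \<in> gamma_alg r 0"
    by (intro gamma_alg_diff gamma_alg_cst_mult ResQ_in_gamma_alg[OF r] gamma_alg_sum gamma_alg_mult)
  from diff_drop_derivs_in_z_deriv_ideal[OF r this] show ?thesis
    unfolding drop_derivs_residue_identity[OF r] by simp
qed

theorem theorem3p5:
  fixes r :: nat
  assumes "r \<ge> 2"
  shows "\<exists>P W :: dpoly.
     (\<forall>mo\<in>Poly_Mapping.keys P. \<forall>v\<in>Poly_Mapping.keys mo. fst v \<le> r - 2)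
   \<and> peval (zvar r) P = cst (of_nat r ^ 2 / of_nat (r + 1)) * ResQ r (r + 1)
   \<and> P = cst (1/2) * (\<Sum>j=0..r-2. var (j, 0) * var (r - 2 - j, 0)) + W
   \<and> (\<forall>mo\<in>Poly_Mapping.keys W. \<exists>v\<in>Poly_Mapping.keys mo. 1 \<le> snd v)"
proof -
  let ?Z = "cst (1/2) * (\<Sum>j=0..r-2. var (j, 0) * var (r - 2 - j, 0))"
  obtain W where W: "W \<in> zpoly_deriv r" and eval_W:
    "peval (zvar r) W = cst (of_nat r ^ 2 / of_nat (r + 1)) * ResQ r (r + 1)
       - cst (1/2) * (\<Sum>j=0..r-2. zz r j * zz r (r - 2 - j))"
    using residue_minus_quadratic_in_z_deriv_ideal[OF assms] unfolding z_deriv_ideal_def by auto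
  have "?Z + W \<in> zpoly r"
    using W by (intro zpoly_add zpoly_mult zpoly_cst zpoly_sum zpoly_var) (auto simp: zpoly_deriv_def)
  moreover have "peval (zvar r) (?Z + W) = cst (of_nat r ^ 2 / of_nat (r + 1)) * ResQ r (r + 1)"
    by (simp add: peval_add peval_mult peval_sum eval_W zvar_def)
  ultimately show ?thesis
    using W unfolding zpoly_def zpoly_deriv_def by blast
qed

end
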